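(* Let $l>0$, $\gamma\in(0,1)$ and let $\epsilon:[0,\infty)\to(0,\infty)$ be a monotonically decreasing measurable function such that $\int_1^\infty\frac{\epsilon(k)}{k}\,\mathrm{d}k<\infty$ and $\liminf_{k\to\infty}k^\gamma\epsilon(k)>0$. Then there is a non-negative even real-valued $g\in C_0^\infty(\mathbb{R})$ with support in $[-l,l]$ such that $\int g=1$ and $$\hat g(k)\ge e^{-|k|\epsilon(|k|)}\qquad\text{for all }k\in\mathbb{R}.$$
   Context: The Fourier transform is $\hat f(k)=\int_{\mathbb{R}} e^{-ikx}f(x)\,\mathrm{d}x$. *)

theory Defs
  imports "HOL-Analysis.Analysis"
begin

definition fourier :: "(real \<Rightarrow> real) \<Rightarrow> real \<Rightarrow> complex" where
  "fourier f k = (LINT x|lborel. cis (- k * x) * complex_of_real (f x))"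

definition smooth_fun :: "(real \<Rightarrow> real) \<Rightarrow> bool" where
  "smooth_fun f \<longleftrightarrow> (\<forall>n x. ((deriv ^^ n) f) differentiable (at x))"

end

theory Submission
  imports Defs "HOL-Probability.Probability"
begin

text \<open>
  The function \<open>\<psi>(u) = 6 (u - sin u) / u\<^sup>3\<close> is the characteristic function of the density
  \<open>(3/2) (1 - \<bar>x\<bar>)\<^sup>2\<close> on \<open>[-1, 1]\<close>; it is positive, \<open>O(u\<^sup>-\<^sup>2)\<close>, and
  \<open>\<psi>(u) \<ge> exp (- (2/d + 1) \<bar>u\<bar>\<^sup>d)\<close> for \<open>0 < d \<le> 1\<close>.
  For positive summable scales \<open>a\<^sub>j\<close> the convolutions of the rescaled densities have
  characteristic functions \<open>\<Prod>\<^sub>j\<^sub><\<^sub>n \<psi>(a\<^sub>j t)\<close>, which decrease to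
  \<open>\<Phi>(t) = \<Prod>\<^sub>j \<psi>(a\<^sub>j t) \<ge> exp (- (2/d + 1) (\<Sum>\<^sub>j a\<^sub>j\<^sup>d) \<bar>t\<bar>\<^sup>d)\<close> and
  decay faster than any power of \<open>t\<close>. Hence \<open>g(x) = (2\<pi>)\<^sup>-\<^sup>1 \<integral> \<Phi>(t) cos (t x) dt\<close>
  is smooth, and by Levy's inversion formula it is the derivative of the limit of the
  distribution functions. So \<open>g\<close> is a probability density supported in
  \<open>[-\<Sum>\<^sub>j a\<^sub>j, \<Sum>\<^sub>j a\<^sub>j]\<close> whose Fourier transform is \<open>\<Phi>\<close>.

  With \<open>a\<^sub>j = \<kappa> (j + 1)\<^sup>-\<^sup>2\<^sup>/\<^sup>\<beta>\<close>, \<open>\<beta> = 1 - \<gamma>\<close> and \<open>\<kappa>\<close> small, the bound with \<open>d = 1\<close>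
  handles bounded \<open>\<bar>k\<bar>\<close> via the monotonicity of \<open>\<epsilon>\<close>, and the bound with
  \<open>d = \<beta>\<close> handles large \<open>\<bar>k\<bar>\<close>, where \<open>\<bar>k\<bar> \<epsilon>(\<bar>k\<bar>) \<ge> c \<bar>k\<bar>\<^sup>\<beta>\<close> by the
  liminf hypothesis.
\<close>

section \<open>The parabolic kernel\<close>

definition parabolic_char :: "real \<Rightarrow> real" where
  "parabolic_char u = (if u = 0 then 1 else 6 * (u - sin u) / u ^ 3)"

lemma parabolic_char_minus [simp]: "parabolic_char (- u) = parabolic_char u"
  by (simp add: parabolic_char_def power_minus_odd divide_simps)

lemma parabolic_char_abs [simp]: "parabolic_char \<bar>u\<bar> = parabolic_char u"
  by (cases "u \<ge> 0") simp_all

lemma sin_cubic_approx: "\<bar>sin x - (x - x ^ 3 / 6)\<bar> \<le> \<bar>x :: real\<bar> ^ 5 / 120"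
proof -
  have "sin_coeff 0 = 0" "sin_coeff 1 = 1" "sin_coeff 2 = 0" "sin_coeff 3 = -1/6" "sin_coeff 4 = 0"
    by (simp_all add: sin_coeff_def fact_numeral)
  then have taylor: "(\<Sum>m<5. sin_coeff m * x ^ m) = x - x ^ 3 / 6"
    by (simp add: numeral_eq_Suc)
  have remainder: "inverse (fact 5) * \<bar>x\<bar> ^ 5 = \<bar>x\<bar> ^ 5 / (120 :: real)"
    by (simp add: fact_numeral)
  show ?thesis
    using Maclaurin_sin_bound[of x 5] unfolding taylor remainder .
qed

lemma sin_less_self:
  assumes "x > 0" shows "sin x < (x :: real)"
proof (cases "x \<le> 1")
  case True
  have "\<bar>sin x - (x - x ^ 3 / 6)\<bar> \<le> x ^ 5 / 120" using sin_cubic_approx[of x] assms by simp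
  moreover have "x ^ 5 \<le> x ^ 3" "x ^ 3 > 0" using True assms by (simp_all add: power_decreasing)
  ultimately show ?thesis by linarith
next
  case False
  then show ?thesis using sin_le_one[of x] by linarith
qed

lemma parabolic_char_pos: "parabolic_char u > 0"
proof (cases "u = 0")
  case False
  then have "parabolic_char \<bar>u\<bar> > 0"
    using sin_less_self[of "\<bar>u\<bar>"] by (simp add: parabolic_char_def del: parabolic_char_abs)
  then show ?thesis by simp
qed (simp add: parabolic_char_def)

definition parabolic_density :: "real \<Rightarrow> real \<Rightarrow> real" where
  "parabolic_density a x = indicator {-a..a} x * (3 / (2 * a) * (1 - \<bar>x\<bar> / a) ^ 2)"

definition parabolic_distr :: "real \<Rightarrow> real measure" where
  "parabolic_distr a = density lborel (\<lambda>x. ennreal (parabolic_density a x))"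

lemma parabolic_density_nonneg: "a > 0 \<Longrightarrow> parabolic_density a x \<ge> 0"
  unfolding parabolic_density_def by (intro mult_nonneg_nonneg) (simp_all add: indicator_def)

lemma parabolic_density_minus [simp]: "parabolic_density a (- x) = parabolic_density a x"
  by (auto simp: parabolic_density_def indicator_def)

lemma borel_measurable_parabolic_density [measurable]: "parabolic_density a \<in> borel_measurable borel"
  unfolding parabolic_density_def by measurable

lemma integral_reflect_lborel:
  fixes f :: "real \<Rightarrow> real"
  shows "(LINT x|lborel. f (- x)) = (LINT x|lborel. f x)"
  using lborel_integral_real_affine[of "-1" f 0] by simp

lemma integral_odd_lborel:
  fixes f :: "real \<Rightarrow> real"
  assumes "\<And>x. f (- x) = - f x"
  shows "(LINT x|lborel. f x) = 0"
  using integral_reflect_lborel[of f] assms by simp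

lemma parabolic_cos_integral_half:
  assumes "a > 0"
  shows "(LBINT x=ereal 0..ereal a. 3 / (2 * a) * (1 - \<bar>x\<bar> / a) ^ 2 * cos (t * x)) = parabolic_char (a * t) / 2"
proof (cases "t = 0")
  case True
  let ?F = "\<lambda>x. - 1 / 2 * (1 - x / a) ^ 3"
  have "(LBINT x=ereal 0..ereal a. 3 / (2 * a) * (1 - \<bar>x\<bar> / a) ^ 2 * cos (t * x)) = ?F a - ?F 0"
  proof (rule interval_integral_FTC_finite)
    fix x assume "min 0 a \<le> x" "x \<le> max 0 a"
    then show "(?F has_vector_derivative 3 / (2 * a) * (1 - \<bar>x\<bar> / a) ^ 2 * cos (t * x))
        (at x within {min 0 a..max 0 a})"
      using assms True
      by (auto intro!: derivative_eq_intros simp: has_real_derivative_iff_has_vector_derivative[symmetric]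
          field_simps power2_eq_square eval_nat_numeral)
  qed (use assms in \<open>auto intro!: continuous_intros\<close>)
  then show ?thesis using assms True by (simp add: parabolic_char_def)
next
  case False
  let ?F = "\<lambda>x. 3 / (2 * a) * ((1 - x / a) ^ 2 * sin (t * x) / t
    - 2 * (1 - x / a) / a * cos (t * x) / t ^ 2 - 2 / a ^ 2 * sin (t * x) / t ^ 3)"
  have "(LBINT x=ereal 0..ereal a. 3 / (2 * a) * (1 - \<bar>x\<bar> / a) ^ 2 * cos (t * x)) = ?F a - ?F 0"
  proof (rule interval_integral_FTC_finite)
    fix x assume "min 0 a \<le> x" "x \<le> max 0 a"
    then show "(?F has_vector_derivative 3 / (2 * a) * (1 - \<bar>x\<bar> / a) ^ 2 * cos (t * x))
        (at x within {min 0 a..max 0 a})"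
      using assms False
      by (auto intro!: derivative_eq_intros simp: has_real_derivative_iff_has_vector_derivative[symmetric]
          field_simps power2_eq_square eval_nat_numeral)
  qed (use assms in \<open>auto intro!: continuous_intros\<close>)
  also have "\<dots> = parabolic_char (a * t) / 2"
    using assms False by (simp add: parabolic_char_def field_simps power2_eq_square eval_nat_numeral)
  finally show ?thesis .
qed

lemma integral_parabolic_density_cos:
  assumes "a > 0"
  shows "(LINT x|lborel. parabolic_density a x * cos (t * x)) = parabolic_char (a * t)"
proof -
  define k where "k x = 3 / (2 * a) * (1 - \<bar>x\<bar> / a) ^ 2 * cos (t * x)" for x
  have k_cont: "continuous_on A k" for A
    unfolding k_def using assms by (intro continuous_intros) auto
  have "(LINT x|lborel. parabolic_density a x * cos (t * x)) = (LBINT x:{-a..a}. k x)"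
    unfolding set_lebesgue_integral_def k_def parabolic_density_def
    by (intro Bochner_Integration.integral_cong) (auto simp: indicator_def)
  also have "\<dots> = (LBINT x=ereal (-a)..ereal a. k x)"
    using assms by (simp add: interval_integral_Icc)
  also have "\<dots> = (LBINT x=ereal (-a)..ereal 0. k x) + (LBINT x=ereal 0..ereal a. k x)"
    using assms
    by (subst interval_integral_sum[symmetric])
       (auto simp: min_def max_def intro!: interval_integrable_continuous_on k_cont)
  also have "(LBINT x=ereal (-a)..ereal 0. k x) = (LBINT x=ereal 0..ereal a. k x)"
    using interval_integral_reflect[of "ereal (-a)" "ereal 0" k] by (simp add: k_def zero_ereal_def)
  also have "(LBINT x=ereal 0..ereal a. k x) = parabolic_char (a * t) / 2"
    unfolding k_def by (rule parabolic_cos_integral_half[OF assms])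
  finally show ?thesis by simp
qed

lemma integrable_parabolic_density_mult:
  assumes "continuous_on UNIV f" "a > 0"
  shows "integrable lborel (\<lambda>x. parabolic_density a x * f x)"
proof -
  have "set_integrable lborel {-a..a} (\<lambda>x. 3 / (2 * a) * (1 - \<bar>x\<bar> / a) ^ 2 * f x)"
    using assms
    by (intro borel_integrable_atLeastAtMost' continuous_intros continuous_on_subset[OF assms(1)]) auto
  then show ?thesis
    unfolding set_integrable_def parabolic_density_def by (simp add: mult.assoc)
qed

lemma real_distribution_parabolic_distr:
  assumes "a > 0" shows "real_distribution (parabolic_distr a)"
proof -
  have "emeasure (parabolic_distr a) UNIV = ennreal (LINT x|lborel. parabolic_density a x)"
    unfolding parabolic_distr_def using assms
    by (simp add: emeasure_density nn_integral_eq_integral parabolic_density_nonneg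
        integrable_parabolic_density_mult[of "\<lambda>_. 1", simplified])
  also have "\<dots> = 1"
    using integral_parabolic_density_cos[OF assms, of 0] by (simp add: parabolic_char_def)
  finally have "prob_space (parabolic_distr a)"
    by (intro prob_spaceI) (simp add: parabolic_distr_def)
  then show ?thesis
    by (simp add: real_distribution_def real_distribution_axioms_def parabolic_distr_def)
qed

lemma char_parabolic_distr:
  assumes "a > 0" shows "char (parabolic_distr a) t = complex_of_real (parabolic_char (a * t))"
proof -
  let ?c = "\<lambda>x. parabolic_density a x * cos (t * x)" and ?s = "\<lambda>x. parabolic_density a x * sin (t * x)"
  have "iexp y = complex_of_real (cos y) + \<i> * complex_of_real (sin y)" for y
    by (simp add: cis_conv_exp[symmetric] cis.code complex_eq_iff)
  then have "parabolic_density a x *\<^sub>R iexp (t * x) = complex_of_real (?c x) + \<i> * complex_of_real (?s x)" for x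
    by (simp only:) (simp add: scaleR_conv_of_real algebra_simps)
  then have "char (parabolic_distr a) t = (CLINT x|lborel. complex_of_real (?c x) + \<i> * complex_of_real (?s x))"
    unfolding char_def parabolic_distr_def using parabolic_density_nonneg[OF assms]
    by (subst integral_density) simp_all
  also have "\<dots> = complex_of_real (LINT x|lborel. ?c x) + \<i> * complex_of_real (LINT x|lborel. ?s x)"
  proof -
    have "integrable lborel (\<lambda>x. complex_of_real (?c x))" "integrable lborel (\<lambda>x. \<i> * complex_of_real (?s x))"
      using assms
      by (intro integrable_mult_right integrable_of_real integrable_parabolic_density_mult continuous_intros, simp)+
    then show ?thesis
      by (simp only: Bochner_Integration.integral_add integral_complex_of_real integral_mult_right_zero)
  qed
  also have "(LINT x|lborel. ?s x) = 0"
    by (rule integral_odd_lborel) simp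
  finally show ?thesis
    using integral_parabolic_density_cos[OF assms] by simp
qed

lemma AE_parabolic_distr: "a > 0 \<Longrightarrow> AE x in parabolic_distr a. \<bar>x\<bar> \<le> a"
  unfolding parabolic_distr_def by (subst AE_density) (auto simp: parabolic_density_def indicator_def)

lemma emeasure_parabolic_distr_singleton: "emeasure (parabolic_distr a) {x} = 0"
  unfolding parabolic_distr_def by (subst emeasure_density) auto

lemma parabolic_char_le_1: "parabolic_char u \<le> 1"
proof -
  interpret real_distribution "parabolic_distr 1" by (rule real_distribution_parabolic_distr) simp
  show ?thesis
    using cmod_char_le_1[of u] char_parabolic_distr[of 1 u] parabolic_char_pos[of u] by simp
qed

lemma continuous_parabolic_char: "continuous_on A parabolic_char"
proof -
  interpret real_distribution "parabolic_distr 1" by (rule real_distribution_parabolic_distr) simp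
  have "parabolic_char = (\<lambda>u. Re (char (parabolic_distr 1) u))"
    using char_parabolic_distr[of 1] by auto
  moreover have "isCont (\<lambda>u. Re (char (parabolic_distr 1) u)) u" for u
    using isCont_char by (auto intro!: continuous_intros)
  ultimately show ?thesis
    by (simp add: continuous_at_imp_continuous_on)
qed

lemma parabolic_char_ge_quadratic: "parabolic_char u \<ge> 1 - u ^ 2 / 20"
proof (cases "u = 0")
  case False
  have "\<bar>6 * (sin u - (u - u ^ 3 / 6)) / u ^ 3\<bar> = 6 * \<bar>sin u - (u - u ^ 3 / 6)\<bar> / \<bar>u\<bar> ^ 3"
    by (simp only: abs_divide abs_mult power_abs)
  also have "\<dots> \<le> 6 * (\<bar>u\<bar> ^ 5 / 120) / \<bar>u\<bar> ^ 3"
    using sin_cubic_approx[of u] by (intro divide_right_mono mult_left_mono) auto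
  also have "\<dots> = u ^ 2 / 20"
    using False by (simp add: field_simps power2_eq_square eval_nat_numeral)
  finally have "6 * (sin u - (u - u ^ 3 / 6)) / u ^ 3 \<le> u ^ 2 / 20" by linarith
  moreover have "parabolic_char u = 1 - 6 * (sin u - (u - u ^ 3 / 6)) / u ^ 3"
    using False by (simp add: parabolic_char_def field_simps)
  ultimately show ?thesis by linarith
qed (simp add: parabolic_char_def)

lemma parabolic_char_ge_inverse_square:
  assumes "\<bar>u\<bar> \<ge> 2" shows "parabolic_char u \<ge> 3 / u ^ 2"
proof -
  let ?v = "\<bar>u\<bar>"
  have "?v - sin ?v \<ge> ?v / 2" using sin_le_one[of ?v] assms by linarith
  then have "6 * (?v - sin ?v) / ?v ^ 3 \<ge> 6 * (?v / 2) / ?v ^ 3"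
    using assms by (intro divide_right_mono) auto
  moreover have "6 * (?v / 2) / ?v ^ 3 = 3 / u ^ 2"
    using assms by (simp add: field_simps power2_eq_square eval_nat_numeral)
  moreover have "parabolic_char ?v = 6 * (?v - sin ?v) / ?v ^ 3"
    using assms by (simp add: parabolic_char_def del: parabolic_char_abs)
  ultimately show ?thesis by simp
qed

lemma parabolic_char_le_inverse_square:
  assumes "\<bar>u\<bar> \<ge> 1" shows "parabolic_char u \<le> 12 / u ^ 2"
proof -
  let ?v = "\<bar>u\<bar>"
  have "?v - sin ?v \<le> 2 * ?v" using sin_ge_minus_one[of ?v] assms by linarith
  then have "6 * (?v - sin ?v) / ?v ^ 3 \<le> 6 * (2 * ?v) / ?v ^ 3"
    using assms by (intro divide_right_mono) auto
  moreover have "6 * (2 * ?v) / ?v ^ 3 = 12 / u ^ 2"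
    using assms by (simp add: field_simps power2_eq_square eval_nat_numeral)
  moreover have "parabolic_char ?v = 6 * (?v - sin ?v) / ?v ^ 3"
    using assms by (simp add: parabolic_char_def del: parabolic_char_abs)
  ultimately show ?thesis by simp
qed

lemma parabolic_char_le_inverse_one_plus_square: "parabolic_char u \<le> 24 / (1 + u ^ 2)"
proof (cases "\<bar>u\<bar> \<le> 1")
  case True
  then have "u ^ 2 \<le> 1" by (simp add: abs_square_le_1)
  moreover have "1 + u ^ 2 > 0" by (simp add: add_pos_nonneg)
  ultimately have "1 \<le> 24 / (1 + u ^ 2)" by (simp add: le_divide_eq)
  then show ?thesis using parabolic_char_le_1[of u] by linarith
next
  case False
  then have "1 \<le> u ^ 2" using abs_le_square_iff[of 1 u] by simp
  then have "24 / (2 * u ^ 2) \<le> 24 / (1 + u ^ 2)"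
    by (intro divide_left_mono) (auto intro!: mult_pos_pos add_pos_nonneg)
  then have "12 / u ^ 2 \<le> 24 / (1 + u ^ 2)" by simp
  then show ?thesis using parabolic_char_le_inverse_square[of u] False by linarith
qed

lemma exp_minus_double_le:
  fixes x :: real
  assumes "0 \<le> x" "x \<le> 1 / 2"
  shows "exp (- (2 * x)) \<le> 1 - x"
proof -
  have "exp (- (2 * x)) \<le> 1 / (1 + 2 * x)"
    using exp_ge_add_one_self[of "2 * x"] assms by (simp add: exp_minus field_simps)
  also have "x * (2 * x) \<le> x * 1"
    using assms by (intro mult_left_mono) auto
  then have "1 / (1 + 2 * x) \<le> 1 - x"
    using assms by (simp add: field_simps)
  finally show ?thesis .
qed

lemma square_le_powr:
  fixes u d :: real
  assumes "\<bar>u\<bar> \<le> 2" "0 < d" "d \<le> 2"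
  shows "u ^ 2 \<le> 4 * \<bar>u\<bar> powr d"
proof (cases "u = 0")
  case False
  have "u ^ 2 = \<bar>u\<bar> powr d * \<bar>u\<bar> powr (2 - d)"
    using False by (simp add: powr_add[symmetric] powr_numeral)
  also have "\<dots> \<le> \<bar>u\<bar> powr d * 2 powr (2 - d)"
    using assms False by (intro mult_left_mono powr_mono2) auto
  also have "\<dots> \<le> \<bar>u\<bar> powr d * 4"
    using assms powr_mono[of "2 - d" 2 "2 :: real"] by (intro mult_left_mono) (auto simp: powr_numeral)
  finally show ?thesis by simp
qed simp

lemma parabolic_char_ge_exp_powr:
  assumes d: "0 < d" "d \<le> 1"
  shows "parabolic_char u \<ge> exp (- ((2 / d + 1) * \<bar>u\<bar> powr d))"
proof (cases "\<bar>u\<bar> \<le> 2")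
  case True
  have "u ^ 2 \<le> 2 ^ 2"
    using True power_mono[of "\<bar>u\<bar>" 2 2] by simp
  then have "exp (- (2 * (u ^ 2 / 20))) \<le> 1 - u ^ 2 / 20"
    by (intro exp_minus_double_le) auto
  moreover have "2 * (u ^ 2 / 20) \<le> (2 / d + 1) * \<bar>u\<bar> powr d"
  proof -
    have "\<bar>u\<bar> powr d \<le> (2 / d + 1) * \<bar>u\<bar> powr d"
      using d by (simp add: mult_le_cancel_right1)
    then show ?thesis
      using square_le_powr[OF True, of d] d powr_ge_zero[of "\<bar>u\<bar>" d] by linarith
  qed
  then have "exp (- ((2 / d + 1) * \<bar>u\<bar> powr d)) \<le> exp (- (2 * (u ^ 2 / 20)))"
    by simp
  ultimately show ?thesis
    using parabolic_char_ge_quadratic[of u] by linarith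
next
  case False
  then have u: "\<bar>u\<bar> \<ge> 2" by simp
  have "ln (u ^ 2 / 3) \<le> ln (u ^ 2)" using u by (simp add: ln_div)
  also have "\<dots> = 2 * ln \<bar>u\<bar>" using u ln_realpow[of "\<bar>u\<bar>" 2] by simp
  also have "\<dots> \<le> 2 * (\<bar>u\<bar> powr d / d)" using u d ln_powr_bound[of "\<bar>u\<bar>" d] by simp
  also have "\<dots> \<le> (2 / d + 1) * \<bar>u\<bar> powr d" by (simp add: algebra_simps)
  finally have "exp (- ((2 / d + 1) * \<bar>u\<bar> powr d)) \<le> exp (- ln (u ^ 2 / 3))" by simp
  also have "\<dots> = 3 / u ^ 2" using u by (simp add: exp_minus)
  finally show ?thesis using parabolic_char_ge_inverse_square[OF u] by linarith
qed

section \<open>Convolutions and products of characteristic functions\<close>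

lemma real_distribution_convolution:
  assumes "real_distribution M" "real_distribution N"
  shows "real_distribution (M \<star> N)"
proof -
  interpret M: real_distribution M by fact
  interpret N: real_distribution N by fact
  interpret P: pair_prob_space M N ..
  have "prob_space (distr (M \<Otimes>\<^sub>M N) borel (\<lambda>(x, y). x + y))"
    by (rule P.prob_space_distr) simp
  then show ?thesis
    unfolding convolution_def real_distribution_def real_distribution_axioms_def by simp
qed

lemma char_convolution:
  assumes "real_distribution M" "real_distribution N"
  shows "char (M \<star> N) t = char M t * char N t"
proof -
  interpret M: real_distribution M by fact
  interpret N: real_distribution N by fact
  interpret P: pair_prob_space M N ..
  have "char (M \<star> N) t = (CLINT z|M \<Otimes>\<^sub>M N. iexp (t * fst z) * iexp (t * snd z))"
    unfolding char_def convolution_def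
    by (subst integral_distr) (auto simp: case_prod_beta distrib_left exp_add algebra_simps)
  also have "\<dots> = (CLINT x|M. (CLINT y|N. iexp (t * x) * iexp (t * y)))"
  proof -
    have "integrable (M \<Otimes>\<^sub>M N) (\<lambda>z. iexp (t * fst z) * iexp (t * snd z))"
      by (intro P.integrable_const_bound[where B=1]) (auto simp: norm_mult)
    then show ?thesis by (subst P.integral_fst'[symmetric]) auto
  qed
  also have "\<dots> = char M t * char N t"
    unfolding char_def by simp
  finally show ?thesis .
qed

lemma AE_convolution_abs_le:
  assumes "real_distribution M" "real_distribution N"
    and "AE x in M. \<bar>x\<bar> \<le> r" "AE y in N. \<bar>y\<bar> \<le> s"
  shows "AE z in M \<star> N. \<bar>z\<bar> \<le> r + s"
proof -
  interpret M: real_distribution M by fact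
  interpret N: real_distribution N by fact
  interpret P: pair_prob_space M N ..
  have ae: "AE x in M. AE y in N. \<bar>x + y\<bar> \<le> r + s"
    using assms(3) proof eventually_elim
    case (elim x)
    show ?case using assms(4) by eventually_elim (use elim in auto)
  qed
  have "AE z in M \<Otimes>\<^sub>M N. \<bar>fst z + snd z\<bar> \<le> r + s"
  proof (rule P.AE_pair_measure)
    show "{z \<in> space (M \<Otimes>\<^sub>M N). \<bar>fst z + snd z\<bar> \<le> r + s} \<in> sets (M \<Otimes>\<^sub>M N)"
      by measurable
  qed (use ae in simp)
  then show ?thesis
    unfolding convolution_def by (subst AE_distr_iff) (auto simp: case_prod_beta)
qed

lemma emeasure_convolution_singleton:
  assumes "real_distribution M" "real_distribution N" "\<And>x. emeasure N {x} = 0"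
  shows "emeasure (M \<star> N) {z} = 0"
proof -
  interpret M: real_distribution M by fact
  interpret N: real_distribution N by fact
  have "emeasure (M \<star> N) {z} = (\<integral>\<^sup>+x. emeasure N {b. b + x \<in> {z}} \<partial>M)"
    by (rule convolution_emeasure) (auto intro: M.finite_measure_axioms N.finite_measure_axioms)
  also have "\<dots> = 0"
    using assms(3)[of "z - _"] by (simp add: eq_diff_eq[symmetric])
  finally show ?thesis .
qed

definition char_prod :: "(nat \<Rightarrow> real) \<Rightarrow> nat \<Rightarrow> real \<Rightarrow> real" where
  "char_prod a n t = (\<Prod>j<n. parabolic_char (a j * t))"

definition char_infprod :: "(nat \<Rightarrow> real) \<Rightarrow> real \<Rightarrow> real" where
  "char_infprod a t = (INF n. char_prod a n t)"

lemma char_prod_pos: "char_prod a n t > 0"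
  unfolding char_prod_def by (intro prod_pos) (auto intro: parabolic_char_pos)

lemma decseq_char_prod: "decseq (\<lambda>n. char_prod a n t)"
  using char_prod_pos parabolic_char_le_1
  by (intro decseq_SucI) (simp add: char_prod_def mult_left_le)

lemma char_prod_minus [simp]: "char_prod a n (- t) = char_prod a n t"
  unfolding char_prod_def by (metis mult_minus_right parabolic_char_minus)

lemma continuous_char_prod: "continuous_on A (char_prod a n)"
  unfolding char_prod_def
  by (intro continuous_on_prod continuous_on_compose2[OF continuous_parabolic_char] continuous_intros) auto

lemma borel_measurable_char_prod [measurable]: "char_prod a n \<in> borel_measurable borel"
  by (rule borel_measurable_continuous_onI[OF continuous_char_prod])

lemma char_prod_tendsto: "(\<lambda>n. char_prod a n t) \<longlonglongrightarrow> char_infprod a t"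
  unfolding char_infprod_def
  by (rule LIMSEQ_decseq_INF) (auto intro: decseq_char_prod bdd_belowI[where m=0] less_imp_le[OF char_prod_pos])

lemma char_infprod_le: "char_infprod a t \<le> char_prod a n t"
  by (rule decseq_ge[OF decseq_char_prod char_prod_tendsto])

lemma char_infprod_nonneg: "char_infprod a t \<ge> 0"
  by (rule LIMSEQ_le_const[OF char_prod_tendsto]) (auto intro: less_imp_le[OF char_prod_pos])

lemma char_infprod_minus [simp]: "char_infprod a (- t) = char_infprod a t"
  unfolding char_infprod_def by simp

lemma borel_measurable_char_infprod [measurable]: "char_infprod a \<in> borel_measurable borel"
  by (rule borel_measurable_LIMSEQ_real[OF char_prod_tendsto]) simp

lemma char_infprod_ge_exp_powr:
  assumes d: "0 < d" "d \<le> 1" and pos: "\<And>j. a j > 0" and summable: "summable (\<lambda>j. a j powr d)"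
  shows "char_infprod a t \<ge> exp (- ((2 / d + 1) * (\<Sum>j. a j powr d) * \<bar>t\<bar> powr d))"
proof (rule LIMSEQ_le_const[OF char_prod_tendsto], intro exI allI impI)
  fix n
  define C where "C = 2 / d + 1"
  have "(\<Sum>j<n. a j powr d) \<le> (\<Sum>j. a j powr d)"
    by (rule sum_le_suminf[OF summable]) auto
  then have "exp (- (C * (\<Sum>j. a j powr d) * \<bar>t\<bar> powr d)) \<le> exp (- (C * (\<Sum>j<n. a j powr d) * \<bar>t\<bar> powr d))"
    using d by (simp add: C_def mult_right_mono mult_left_mono)
  also have "\<dots> = (\<Prod>j<n. exp (- (C * \<bar>a j * t\<bar> powr d)))"
  proof -
    have "\<bar>a j * t\<bar> powr d = a j powr d * \<bar>t\<bar> powr d" for j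
      using pos[of j] by (simp add: abs_mult powr_mult)
    then have "- (C * (\<Sum>j<n. a j powr d) * \<bar>t\<bar> powr d) = (\<Sum>j<n. - (C * \<bar>a j * t\<bar> powr d))"
      by (simp add: sum_distrib_left sum_distrib_right sum_negf algebra_simps)
    then show ?thesis by (simp add: exp_sum)
  qed
  also have "\<dots> \<le> char_prod a n t"
    unfolding char_prod_def C_def by (intro prod_mono conjI parabolic_char_ge_exp_powr d) auto
  finally show "exp (- ((2 / d + 1) * (\<Sum>j. a j powr d) * \<bar>t\<bar> powr d)) \<le> char_prod a n t"
    unfolding C_def .
qed

lemma parabolic_char_scaled_le:
  assumes "b > 0"
  shows "parabolic_char (b * t) \<le> 24 / min 1 (b ^ 2) * inverse (1 + t ^ 2)"
proof -
  define c where "c = min 1 (b ^ 2)"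
  have c: "0 < c" "c \<le> 1" "c \<le> b ^ 2" using assms by (auto simp: c_def)
  then have "c * (1 + t ^ 2) \<le> 1 + (b * t) ^ 2"
    using mult_right_mono[of c "b ^ 2" "t ^ 2"] by (simp add: algebra_simps power_mult_distrib)
  then have "24 / (1 + (b * t) ^ 2) \<le> 24 / (c * (1 + t ^ 2))"
    using c by (intro divide_left_mono) (auto intro!: mult_pos_pos add_pos_nonneg)
  then show ?thesis
    using parabolic_char_le_inverse_one_plus_square[of "b * t"] by (simp add: c_def field_simps)
qed

lemma abs_le_one_plus_square: "\<bar>t\<bar> \<le> 1 + (t :: real) ^ 2"
proof -
  have "0 \<le> (\<bar>t\<bar> - 1) ^ 2" by simp
  then show ?thesis by (simp add: power2_diff)
qed

lemma char_prod_moment_bound: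
  assumes pos: "\<And>j. a j > 0"
  obtains K where "\<And>t. \<bar>t\<bar> ^ m * char_prod a (Suc m) t \<le> K * inverse (1 + t ^ 2)"
proof
  define K where "K = (\<Prod>j<Suc m. 24 / min 1 (a j ^ 2))"
  fix t :: real
  have "char_prod a (Suc m) t \<le> (\<Prod>j<Suc m. 24 / min 1 (a j ^ 2) * inverse (1 + t ^ 2))"
    unfolding char_prod_def
    by (intro prod_mono conjI parabolic_char_scaled_le pos less_imp_le[OF parabolic_char_pos])
  also have "\<dots> = K * inverse (1 + t ^ 2) ^ Suc m"
    unfolding K_def by (simp only: prod.distrib prod_constant card_lessThan)
  finally have "\<bar>t\<bar> ^ m * char_prod a (Suc m) t \<le> (1 + t ^ 2) ^ m * (K * inverse (1 + t ^ 2) ^ Suc m)"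
    using char_prod_pos[of a "Suc m" t] abs_le_one_plus_square[of t]
    by (intro mult_mono power_mono) (auto simp: K_def intro!: prod_nonneg)
  also have "\<dots> = K * inverse (1 + t ^ 2)"
  proof -
    have "(1 + t ^ 2) ^ m * inverse (1 + t ^ 2) ^ m = 1"
      by (simp add: power_mult_distrib[symmetric] add_nonneg_eq_0_iff)
    then show ?thesis by (simp add: power_Suc algebra_simps)
  qed
  finally show "\<bar>t\<bar> ^ m * char_prod a (Suc m) t \<le> K * inverse (1 + t ^ 2)" .
qed

lemma integrable_inverse_one_plus_square: "integrable lborel (\<lambda>t::real. inverse (1 + t ^ 2))"
  using integrable_inverse_1_plus_square by (simp add: set_integrable_def)

lemma integrable_char_infprod_moment:
  assumes "\<And>j. a j > 0"
  shows "integrable lborel (\<lambda>t. t ^ m * char_infprod a t)"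
proof -
  obtain K where K: "\<And>t. \<bar>t\<bar> ^ m * char_prod a (Suc m) t \<le> K * inverse (1 + t ^ 2)"
    using char_prod_moment_bound[where a=a, OF assms] by blast
  have bound: "norm (t ^ m * char_infprod a t) \<le> norm (K * inverse (1 + t ^ 2))" for t
  proof -
    have "\<bar>t ^ m * char_infprod a t\<bar> \<le> \<bar>t\<bar> ^ m * char_prod a (Suc m) t"
      using char_infprod_nonneg[of a t] mult_left_mono[OF char_infprod_le[of a t "Suc m"], of "\<bar>t\<bar> ^ m"]
      by (simp add: abs_mult power_abs)
    then show ?thesis using K[of t] abs_ge_self[of "K * inverse (1 + t ^ 2)"] unfolding real_norm_def by linarith
  qed
  show ?thesis
  proof (rule Bochner_Integration.integrable_bound)
    show "integrable lborel (\<lambda>t. K * inverse (1 + t ^ 2))"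
      using integrable_inverse_one_plus_square by (rule integrable_mult_right)
  qed (use bound in auto)
qed

lemma integrable_char_prod:
  assumes "\<And>j. a j > 0"
  shows "integrable lborel (char_prod a (Suc n))"
proof -
  obtain K where K: "\<And>t. \<bar>t\<bar> ^ 0 * char_prod a (Suc 0) t \<le> K * inverse (1 + t ^ 2)"
    using char_prod_moment_bound[where a=a, OF assms] by blast
  have bound: "norm (char_prod a (Suc n) t) \<le> norm (K * inverse (1 + t ^ 2))" for t
    using decseqD[OF decseq_char_prod, of "Suc 0" "Suc n" a t] char_prod_pos[of a "Suc n" t] K[of t]
      abs_ge_self[of "K * inverse (1 + t ^ 2)"]
    unfolding real_norm_def by simp
  show ?thesis
  proof (rule Bochner_Integration.integrable_bound)
    show "integrable lborel (\<lambda>t. K * inverse (1 + t ^ 2))"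
      using integrable_inverse_one_plus_square by (rule integrable_mult_right)
  qed (use bound in auto)
qed

section \<open>Differentiating cosine transforms\<close>

lemma iexp_second_order: "cmod (iexp (u + v) - iexp u - \<i> * v * iexp u) \<le> v ^ 2 / 2"
proof -
  have "iexp (u + v) - iexp u - \<i> * v * iexp u = iexp u * (iexp v - (\<Sum>k\<le>1. (\<i> * v) ^ k / fact k))"
    by (simp add: distrib_left exp_add algebra_simps)
  then show ?thesis
    using iexp_approx1[of v 1] by (simp add: norm_mult power2_eq_square)
qed

lemma cos_second_order: "\<bar>cos (u + v) - cos u + v * sin u\<bar> \<le> (v :: real) ^ 2 / 2"
  using abs_Re_le_cmod[of "iexp (u + v) - iexp u - \<i> * v * iexp u"] iexp_second_order[of u v]
  by (simp add: Re_exp Im_exp)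

lemma sin_second_order: "\<bar>sin (u + v) - sin u - v * cos u\<bar> \<le> (v :: real) ^ 2 / 2"
  using abs_Im_le_cmod[of "iexp (u + v) - iexp u - \<i> * v * iexp u"] iexp_second_order[of u v]
  by (simp add: Re_exp Im_exp)

lemma DERIV_integral_parametric:
  fixes f f' :: "real \<Rightarrow> real \<Rightarrow> real" and w :: "real \<Rightarrow> real"
  assumes integrable: "\<And>x. integrable lborel (\<lambda>t. f t x)"
    and integrable': "integrable lborel (\<lambda>t. f' t x)"
    and integrable_w: "integrable lborel w"
    and remainder: "\<And>t d. \<bar>f t (x + d) - f t x - d * f' t x\<bar> \<le> d ^ 2 * w t"
  shows "((\<lambda>x. LINT t|lborel. f t x) has_real_derivative (LINT t|lborel. f' t x)) (at x)"
proof -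
  define F where "F x = (LINT t|lborel. f t x)" for x
  define D where "D = (LINT t|lborel. f' t x)"
  define W where "W = (LINT t|lborel. w t)"
  have bound: "\<bar>F (x + d) - F x - d * D\<bar> \<le> d ^ 2 * W" for d
  proof -
    have "F (x + d) - F x - d * D = (LINT t|lborel. f t (x + d) - f t x - d * f' t x)"
      unfolding F_def D_def using integrable integrable' by simp
    also have "\<bar>\<dots>\<bar> \<le> (LINT t|lborel. \<bar>f t (x + d) - f t x - d * f' t x\<bar>)"
      by (rule integral_abs_bound)
    also have "\<dots> \<le> (LINT t|lborel. d ^ 2 * w t)"
      using integrable integrable' integrable_w remainder by (intro integral_mono) auto
    finally show ?thesis by (simp add: W_def)
  qed
  have quotient_bound: "\<bar>(F (x + d) - F x) / d - D\<bar> \<le> \<bar>d\<bar> * W" if "d \<noteq> 0" for d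
  proof -
    have "(F (x + d) - F x) / d - D = (F (x + d) - F x - d * D) / d"
      using that by (simp add: field_simps)
    then show ?thesis
      using that bound[of d] by (simp add: abs_divide power2_eq_square divide_le_eq mult.commute mult.left_commute)
  qed
  have "((\<lambda>d. (F (x + d) - F x) / d - D) \<longlongrightarrow> 0) (at 0)"
  proof (rule Lim_null_comparison)
    show "\<forall>\<^sub>F d in at 0. norm ((F (x + d) - F x) / d - D) \<le> \<bar>d\<bar> * W"
      using quotient_bound by (auto simp: eventually_at_filter)
  qed (auto intro!: tendsto_eq_intros)
  then show ?thesis
    by (simp add: DERIV_def LIM_zero_iff F_def[symmetric] D_def[symmetric])
qed

definition cos_transform :: "(real \<Rightarrow> real) \<Rightarrow> real \<Rightarrow> real \<Rightarrow> real" where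
  "cos_transform h \<theta> x = (LINT t|lborel. h t * cos (t * x + \<theta>))"

lemma DERIV_cos_transform:
  assumes [measurable]: "h \<in> borel_measurable borel"
    and integrable: "\<And>m. m \<le> 2 \<Longrightarrow> integrable lborel (\<lambda>t. t ^ m * h t)"
  shows "(cos_transform h \<theta> has_real_derivative cos_transform (\<lambda>t. t * h t) (\<theta> + pi / 2) x) (at x)"
proof -
  have i0: "integrable lborel h" and i1: "integrable lborel (\<lambda>t. t * h t)"
    and i2: "integrable lborel (\<lambda>t. t ^ 2 * h t)"
    using integrable[of 0] integrable[of 1] integrable[of 2] by simp_all
  show ?thesis
    unfolding cos_transform_def
  proof (rule DERIV_integral_parametric[where w="\<lambda>t. \<bar>t ^ 2 * h t\<bar>"])
    show "integrable lborel (\<lambda>t. h t * cos (t * x + \<theta>))" for x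
      by (rule Bochner_Integration.integrable_bound[OF i0]) (auto simp: abs_mult intro!: mult_left_le)
    show "integrable lborel (\<lambda>t. t * h t * cos (t * x + (\<theta> + pi / 2)))"
      by (rule Bochner_Integration.integrable_bound[OF i1]) (auto simp: abs_mult intro!: mult_left_le)
    show "integrable lborel (\<lambda>t. \<bar>t ^ 2 * h t\<bar>)"
      using i2 by (rule integrable_abs)
    fix t d
    have "cos (t * x + (\<theta> + pi / 2)) = - sin (t * x + \<theta>)"
      using cos_add[of "t * x + \<theta>" "pi / 2"] by (simp add: add.assoc)
    then have "h t * cos (t * (x + d) + \<theta>) - h t * cos (t * x + \<theta>) - d * (t * h t * cos (t * x + (\<theta> + pi / 2)))
        = h t * (cos ((t * x + \<theta>) + t * d) - cos (t * x + \<theta>) + (t * d) * sin (t * x + \<theta>))"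
      by (simp add: algebra_simps)
    also have "\<bar>\<dots>\<bar> \<le> \<bar>h t\<bar> * (t * d) ^ 2"
      unfolding abs_mult using cos_second_order[of "t * x + \<theta>" "t * d"] zero_le_power2[of "t * d"]
      by (intro mult_left_mono) (linarith, simp)
    also have "\<dots> = d ^ 2 * \<bar>t ^ 2 * h t\<bar>"
      by (simp add: abs_mult power_mult_distrib)
    finally show "\<bar>h t * cos (t * (x + d) + \<theta>) - h t * cos (t * x + \<theta>) - d * (t * h t * cos (t * x + (\<theta> + pi / 2)))\<bar>
        \<le> d ^ 2 * \<bar>t ^ 2 * h t\<bar>" .
  qed
qed

lemma integrable_moment_shift:
  fixes h :: "real \<Rightarrow> real"
  assumes "\<And>m. integrable lborel (\<lambda>t. t ^ m * h t)"
  shows "integrable lborel (\<lambda>t. t ^ m * (t ^ n * h t))"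
  using assms[of "m + n"] unfolding power_add mult.assoc .

lemma deriv_funpow_cos_transform:
  assumes [measurable]: "h \<in> borel_measurable borel"
    and integrable: "\<And>m. integrable lborel (\<lambda>t. t ^ m * h t)"
  shows "(deriv ^^ n) (cos_transform h \<theta>) = cos_transform (\<lambda>t. t ^ n * h t) (\<theta> + n * (pi / 2))"
proof (induction n)
  case (Suc n)
  have "(\<lambda>t. t * (t ^ n * h t)) = (\<lambda>t. t ^ Suc n * h t)"
    by (simp add: mult.assoc)
  moreover have "\<theta> + n * (pi / 2) + pi / 2 = \<theta> + Suc n * (pi / 2)"
    by (simp add: algebra_simps)
  moreover have "deriv (cos_transform (\<lambda>t. t ^ n * h t) (\<theta> + n * (pi / 2)))
      = cos_transform (\<lambda>t. t * (t ^ n * h t)) (\<theta> + n * (pi / 2) + pi / 2)"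
    using integrable_moment_shift[OF integrable]
    by (intro ext DERIV_imp_deriv DERIV_cos_transform) simp_all
  ultimately show ?case
    using Suc by (simp only: funpow.simps comp_apply)
qed simp

lemma smooth_fun_cos_transform:
  assumes [measurable]: "h \<in> borel_measurable borel"
    and integrable: "\<And>m. integrable lborel (\<lambda>t. t ^ m * h t)"
  shows "smooth_fun (cos_transform h \<theta>)"
  unfolding smooth_fun_def
proof (intro allI)
  fix n x
  have "(cos_transform (\<lambda>t. t ^ n * h t) (\<theta> + n * (pi / 2)) has_real_derivative
      cos_transform (\<lambda>t. t * (t ^ n * h t)) (\<theta> + n * (pi / 2) + pi / 2) x) (at x)"
    using integrable_moment_shift[OF integrable] by (intro DERIV_cos_transform) simp_all
  then show "(deriv ^^ n) (cos_transform h \<theta>) differentiable at x"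
    unfolding deriv_funpow_cos_transform[OF assms] real_differentiable_def by blast
qed

lemma smooth_fun_cmult:
  assumes "smooth_fun f"
  shows "smooth_fun (\<lambda>x. c * f x)"
proof -
  have "(deriv ^^ n) (\<lambda>x. c * f x) = (\<lambda>x. c * (deriv ^^ n) f x)" for n
  proof (induction n)
    case (Suc n)
    have "((\<lambda>x. c * (deriv ^^ n) f x) has_real_derivative c * (deriv ^^ Suc n) f x) (at x)" for x
      using assms unfolding smooth_fun_def
      by (intro DERIV_cmult) (simp add: DERIV_deriv_iff_real_differentiable)
    then show ?case
      by (simp add: Suc.IH fun_eq_iff DERIV_imp_deriv)
  qed simp
  then show ?thesis
    using assms by (simp add: smooth_fun_def)
qed

section \<open>Levy inversion and the limit density\<close>

definition sine_kernel :: "real \<Rightarrow> real \<Rightarrow> real \<Rightarrow> real" where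
  "sine_kernel x y t = (sin (t * y) - sin (t * x)) / t"

definition levy_kernel :: "real \<Rightarrow> real \<Rightarrow> real \<Rightarrow> complex" where
  "levy_kernel x y t = (iexp (- (t * x)) - iexp (- (t * y))) / (\<i> * complex_of_real t)"

lemma Re_levy_kernel: "Re (levy_kernel x y t) = sine_kernel x y t"
proof (cases "t = 0")
  case False
  have "levy_kernel x y t = - \<i> * (iexp (- (t * x)) - iexp (- (t * y))) / complex_of_real t"
    unfolding levy_kernel_def using False by (simp add: field_simps)
  then show ?thesis
    by (simp only: Re_divide_of_real) (simp add: Im_exp Re_exp sine_kernel_def)
qed (simp add: levy_kernel_def sine_kernel_def)

lemma norm_levy_kernel_le:
  assumes "x \<le> y" shows "norm (levy_kernel x y t) \<le> y - x"
proof (cases "t = 0")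
  case False
  have "levy_kernel x y t = (iexp (- t * y) - iexp (- t * x)) / (\<i> * complex_of_real (- t))"
    unfolding levy_kernel_def using False by (simp add: field_simps)
  then show ?thesis using Levy_Inversion_aux2[OF assms, of "- t"] False by simp
qed (use assms in \<open>simp add: levy_kernel_def\<close>)

lemma abs_sine_kernel_le: "\<bar>sine_kernel x y t\<bar> \<le> \<bar>y - x\<bar>"
proof (cases "t = 0")
  case False
  have "\<bar>sin (t * y) - sin (t * x)\<bar> \<le> 2 * \<bar>(t * y - t * x) / 2\<bar> * 1"
    unfolding sin_diff_sin abs_mult by (intro mult_mono abs_sin_x_le_abs_x) auto
  also have "\<dots> = \<bar>t\<bar> * \<bar>y - x\<bar>"
    by (simp add: abs_mult[symmetric] algebra_simps)
  finally show ?thesis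
    using False by (simp add: sine_kernel_def abs_divide divide_le_eq mult.commute)
qed (simp add: sine_kernel_def)

text \<open>\<open>sine_kernel x y 0 = 0\<close> (division by zero), hence the case distinction in the
  derivative.\<close>
lemma sine_kernel_second_order:
  "\<bar>sine_kernel x (y + d) t - sine_kernel x y t - d * (if t = 0 then 0 else cos (t * y))\<bar> \<le> \<bar>t\<bar> * d ^ 2 / 2"
proof (cases "t = 0")
  case False
  have "sine_kernel x (y + d) t - sine_kernel x y t - d * (if t = 0 then 0 else cos (t * y))
      = (sin (t * y + t * d) - sin (t * y) - (t * d) * cos (t * y)) / t"
    using False by (simp add: sine_kernel_def field_simps)
  also have "\<bar>\<dots>\<bar> \<le> (t * d) ^ 2 / 2 / \<bar>t\<bar>"
    unfolding abs_divide using False sin_second_order[of "t * y" "t * d"] by (intro divide_right_mono) auto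
  also have "\<dots> = \<bar>t\<bar> * d ^ 2 / 2"
  proof -
    have "(t * d) ^ 2 = \<bar>t\<bar> * \<bar>t\<bar> * d ^ 2"
      by (simp add: power_mult_distrib power2_eq_square)
    then show ?thesis using False by (simp del: abs_mult_self_eq)
  qed
  finally show ?thesis .
qed (simp add: sine_kernel_def)

lemma borel_measurable_sine_kernel [measurable]: "sine_kernel x y \<in> borel_measurable borel"
  unfolding sine_kernel_def by measurable

lemma borel_measurable_levy_kernel [measurable]: "levy_kernel x y \<in> borel_measurable borel"
  unfolding levy_kernel_def by measurable

lemma tendsto_CLBINT_symmetric:
  fixes G :: "real \<Rightarrow> complex"
  assumes G: "integrable lborel G"
  shows "(\<lambda>T::nat. CLBINT t=ereal (- real T)..ereal (real T). G t) \<longlonglongrightarrow> (CLINT t|lborel. G t)"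
proof -
  have [measurable]: "G \<in> borel_measurable borel" using G by (simp add: borel_measurable_integrable)
  have "eventually (\<lambda>T. indicator {- real T..real T} t *\<^sub>R G t = G t) sequentially" for t
  proof -
    obtain N :: nat where "\<bar>t\<bar> \<le> real N" using real_arch_simple by blast
    then show ?thesis
      unfolding eventually_sequentially by (intro exI[of _ N]) (auto simp: indicator_def)
  qed
  then have "(\<lambda>T. CLINT t|lborel. indicator {- real T..real T} t *\<^sub>R G t) \<longlonglongrightarrow> (CLINT t|lborel. G t)"
    using G
    by (intro integral_dominated_convergence[where w="\<lambda>t. norm (G t)"])
       (auto intro: tendsto_eventually AE_I2 simp: indicator_def)
  then show ?thesis
    by (simp add: interval_integral_Icc set_lebesgue_integral_def)
qed

lemma cdf_eq_measure_greaterThanAtMost: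
  assumes "real_distribution M" "AE x in M. x > c"
  shows "cdf M z = measure M {c<..z}"
proof -
  interpret real_distribution M by fact
  show ?thesis
    unfolding cdf_def using assms(2) by (intro measure_eq_AE) (auto elim!: AE_mp)
qed

primrec parabolic_conv :: "(nat \<Rightarrow> real) \<Rightarrow> nat \<Rightarrow> real measure" where
  "parabolic_conv a 0 = return borel 0"
| "parabolic_conv a (Suc n) = (parabolic_conv a n \<star> parabolic_distr (a n))"

locale summable_scales =
  fixes a :: "nat \<Rightarrow> real"
  assumes scale_pos: "\<And>j. a j > 0"
    and scales_summable: "summable a"
begin

lemma real_distribution_parabolic_conv: "real_distribution (parabolic_conv a n)"
proof (induction n)
  case 0
  show ?case by (simp add: real_distribution_def real_distribution_axioms_def prob_space_return)
next
  case (Suc n)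
  then show ?case
    using real_distribution_parabolic_distr[OF scale_pos] by (simp add: real_distribution_convolution)
qed

lemma char_parabolic_conv: "char (parabolic_conv a n) t = complex_of_real (char_prod a n t)"
proof (induction n)
  case 0
  show ?case by (simp add: char_def char_prod_def integral_return)
next
  case (Suc n)
  then show ?case
    using real_distribution_parabolic_conv real_distribution_parabolic_distr[OF scale_pos]
    by (simp add: char_convolution char_parabolic_distr scale_pos char_prod_def)
qed

lemma sum_scales_le: "(\<Sum>j<n. a j) \<le> suminf a"
  by (rule sum_le_suminf[OF scales_summable]) (auto intro: less_imp_le[OF scale_pos])

lemma suminf_scales_nonneg: "suminf a \<ge> 0"
  using sum_scales_le[of 0] by simp

lemma AE_parabolic_conv: "AE x in parabolic_conv a n. \<bar>x\<bar> \<le> suminf a"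
proof -
  have "AE x in parabolic_conv a n. \<bar>x\<bar> \<le> (\<Sum>j<n. a j)"
  proof (induction n)
    case 0
    show ?case by (subst parabolic_conv.simps, subst AE_return) auto
  next
    case (Suc n)
    show ?case
      unfolding parabolic_conv.simps sum.lessThan_Suc
      by (rule AE_convolution_abs_le[OF real_distribution_parabolic_conv
            real_distribution_parabolic_distr[OF scale_pos] Suc AE_parabolic_distr[OF scale_pos]])
  qed
  then show ?thesis
    using sum_scales_le[of n] by (auto elim: AE_mp)
qed

lemma measure_parabolic_conv_singleton: "measure (parabolic_conv a (Suc n)) {x} = 0"
  using emeasure_convolution_singleton[OF real_distribution_parabolic_conv
      real_distribution_parabolic_distr emeasure_parabolic_distr_singleton]
  by (simp add: measure_def scale_pos)

lemma measure_parabolic_conv_interval: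
  assumes "x \<le> y"
  shows "measure (parabolic_conv a (Suc n)) {x<..y}
    = 1 / (2 * pi) * (LINT t|lborel. sine_kernel x y t * char_prod a (Suc n) t)"
proof -
  let ?M = "parabolic_conv a (Suc n)"
  interpret real_distribution ?M by (rule real_distribution_parabolic_conv)
  define G where "G t = levy_kernel x y t * complex_of_real (char_prod a (Suc n) t)" for t
  have "integrable lborel G"
  proof (rule Bochner_Integration.integrable_bound)
    show "integrable lborel (\<lambda>t. (y - x) * char_prod a (Suc n) t)"
      using integrable_char_prod[OF scale_pos] by simp
    show "AE t in lborel. norm (G t) \<le> norm ((y - x) * char_prod a (Suc n) t)"
      using norm_levy_kernel_le[OF assms] char_prod_pos[of a "Suc n"] assms
      by (intro AE_I2) (auto simp: G_def norm_mult abs_mult abs_of_pos intro!: mult_right_mono)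
  qed (simp add: G_def[abs_def])
  have "(\<lambda>T::nat. complex_of_real (1 / (2 * pi)) *
      (CLBINT t=ereal (real_of_int (- int T))..ereal (real T). levy_kernel x y t * char ?M t))
      \<longlonglongrightarrow> complex_of_real (measure ?M {x<..y})"
    using Levy_Inversion[OF assms measure_parabolic_conv_singleton measure_parabolic_conv_singleton]
    unfolding levy_kernel_def .
  then have "(\<lambda>T::nat. complex_of_real (1 / (2 * pi)) * (CLBINT t=ereal (- real T)..ereal (real T). G t))
      \<longlonglongrightarrow> complex_of_real (measure ?M {x<..y})"
    unfolding char_parabolic_conv G_def by simp
  moreover have "(\<lambda>T::nat. complex_of_real (1 / (2 * pi)) * (CLBINT t=ereal (- real T)..ereal (real T). G t))
      \<longlonglongrightarrow> complex_of_real (1 / (2 * pi)) * (CLINT t|lborel. G t)"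
    by (intro tendsto_mult_left tendsto_CLBINT_symmetric) fact
  ultimately have "complex_of_real (measure ?M {x<..y}) = complex_of_real (1 / (2 * pi)) * (CLINT t|lborel. G t)"
    by (rule LIMSEQ_unique)
  then have "measure ?M {x<..y} = Re (complex_of_real (1 / (2 * pi)) * (CLINT t|lborel. G t))"
    by (metis Re_complex_of_real)
  also have "\<dots> = 1 / (2 * pi) * Re (CLINT t|lborel. G t)"
    by simp
  also have "Re (CLINT t|lborel. G t) = (LINT t|lborel. Re (G t))"
    using \<open>integrable lborel G\<close> by simp
  also have "\<dots> = (LINT t|lborel. sine_kernel x y t * char_prod a (Suc n) t)"
    by (simp add: G_def Re_levy_kernel)
  finally show ?thesis .
qed

definition inversion_integral :: "real \<Rightarrow> real \<Rightarrow> real" where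
  "inversion_integral x y = 1 / (2 * pi) * (LINT t|lborel. sine_kernel x y t * char_infprod a t)"

lemma tendsto_measure_parabolic_conv:
  assumes "x \<le> y"
  shows "(\<lambda>n. measure (parabolic_conv a (Suc n)) {x<..y}) \<longlonglongrightarrow> inversion_integral x y"
proof -
  have "(\<lambda>n. LINT t|lborel. sine_kernel x y t * char_prod a (Suc n) t)
      \<longlonglongrightarrow> (LINT t|lborel. sine_kernel x y t * char_infprod a t)"
  proof (rule integral_dominated_convergence[where w="\<lambda>t. \<bar>y - x\<bar> * char_prod a (Suc 0) t"])
    show "integrable lborel (\<lambda>t. \<bar>y - x\<bar> * char_prod a (Suc 0) t)"
      using integrable_char_prod[OF scale_pos] by simp
    show "AE t in lborel. (\<lambda>n. sine_kernel x y t * char_prod a (Suc n) t) \<longlonglongrightarrow> sine_kernel x y t * char_infprod a t"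
      by (intro AE_I2 tendsto_mult_left LIMSEQ_Suc[OF char_prod_tendsto])
    show "AE t in lborel. norm (sine_kernel x y t * char_prod a (Suc n) t) \<le> \<bar>y - x\<bar> * char_prod a (Suc 0) t" for n
      using abs_sine_kernel_le[of x y] less_imp_le[OF char_prod_pos[of a "Suc n"]]
        decseqD[OF decseq_char_prod, of "Suc 0" "Suc n" a]
      by (intro AE_I2) (auto simp: abs_mult intro!: mult_mono)
  qed simp_all
  then show ?thesis
    unfolding inversion_integral_def measure_parabolic_conv_interval[OF assms] by (rule tendsto_mult_left)
qed

lemma measure_parabolic_conv_restrict:
  "measure (parabolic_conv a n) {x<..y} = measure (parabolic_conv a n) ({x<..y} \<inter> {- suminf a..suminf a})"
proof -
  interpret real_distribution "parabolic_conv a n" by (rule real_distribution_parabolic_conv)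
  show ?thesis
    using AE_parabolic_conv[of n] by (intro measure_eq_AE) (auto elim!: AE_mp)
qed

lemma inversion_integral_cong:
  assumes "x \<le> y" "x' \<le> y'"
    and "{x<..y} \<inter> {- suminf a..suminf a} = {x'<..y'} \<inter> {- suminf a..suminf a}"
  shows "inversion_integral x y = inversion_integral x' y'"
  using tendsto_measure_parabolic_conv[OF assms(1)] tendsto_measure_parabolic_conv[OF assms(2)]
  unfolding measure_parabolic_conv_restrict[of _ x y] measure_parabolic_conv_restrict[of _ x' y'] assms(3)
  by (rule LIMSEQ_unique)

lemma inversion_integral_self [simp]: "inversion_integral x x = 0"
  by (simp add: inversion_integral_def sine_kernel_def)

lemma inversion_integral_mono:
  assumes "x \<le> y" "y \<le> y'"
  shows "inversion_integral x y \<le> inversion_integral x y'"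
proof (rule LIMSEQ_le[OF tendsto_measure_parabolic_conv tendsto_measure_parabolic_conv])
  show "\<exists>N. \<forall>n\<ge>N. measure (parabolic_conv a (Suc n)) {x<..y} \<le> measure (parabolic_conv a (Suc n)) {x<..y'}"
  proof (intro exI allI impI)
    fix n
    interpret real_distribution "parabolic_conv a (Suc n)" by (rule real_distribution_parabolic_conv)
    show "measure (parabolic_conv a (Suc n)) {x<..y} \<le> measure (parabolic_conv a (Suc n)) {x<..y'}"
      using assms by (intro finite_measure_mono) auto
  qed
qed (use assms in auto)

lemma inversion_integral_total:
  assumes "x < - suminf a" "suminf a \<le> y"
  shows "inversion_integral x y = 1"
proof -
  have "measure (parabolic_conv a (Suc n)) {x<..y} = 1" for n
  proof -
    interpret real_distribution "parabolic_conv a (Suc n)" by (rule real_distribution_parabolic_conv)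
    have "measure (parabolic_conv a (Suc n)) {x<..y} = prob (space (parabolic_conv a (Suc n)))"
      using AE_parabolic_conv[of "Suc n"] assms by (intro measure_eq_AE) (auto elim!: AE_mp)
    then show ?thesis using prob_space by simp
  qed
  then show ?thesis
    using tendsto_measure_parabolic_conv[of x y] assms suminf_scales_nonneg by (auto intro: LIMSEQ_unique)
qed

definition limit_density :: "real \<Rightarrow> real" where
  "limit_density y = 1 / (2 * pi) * cos_transform (char_infprod a) 0 y"

lemma integrable_char_infprod: "integrable lborel (char_infprod a)"
  using integrable_char_infprod_moment[OF scale_pos, of 0] by simp

lemma DERIV_inversion_integral: "(inversion_integral x has_real_derivative limit_density y) (at y)"
proof -
  define f where "f t y = sine_kernel x y t * char_infprod a t" for t y
  define f' where "f' t = char_infprod a t * (if t = 0 then 0 else cos (t * y))" for t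
  have [measurable]: "f' \<in> borel_measurable borel"
    unfolding f'_def by measurable
  have "((\<lambda>y. LINT t|lborel. f t y) has_real_derivative (LINT t|lborel. f' t)) (at y)"
  proof (rule DERIV_integral_parametric[where w="\<lambda>t. \<bar>t * char_infprod a t\<bar>"])
    show "integrable lborel (\<lambda>t. f t y)" for y
      using abs_sine_kernel_le char_infprod_nonneg
      by (intro Bochner_Integration.integrable_bound[OF integrable_mult_right[OF integrable_char_infprod,
            of "\<bar>y - x\<bar>"]] AE_I2) (auto simp: f_def abs_mult intro!: mult_right_mono)
    show "integrable lborel f'"
      using char_infprod_nonneg
      by (intro Bochner_Integration.integrable_bound[OF integrable_char_infprod] AE_I2)
         (auto simp: f'_def abs_mult intro!: mult_left_le)
    show "integrable lborel (\<lambda>t. \<bar>t * char_infprod a t\<bar>)"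
      using integrable_char_infprod_moment[OF scale_pos, of 1] by (intro integrable_abs) simp
    fix t d
    have "f t (y + d) - f t y - d * f' t
        = char_infprod a t * (sine_kernel x (y + d) t - sine_kernel x y t - d * (if t = 0 then 0 else cos (t * y)))"
      by (simp add: f_def f'_def algebra_simps)
    then have "\<bar>f t (y + d) - f t y - d * f' t\<bar>
        = char_infprod a t * \<bar>sine_kernel x (y + d) t - sine_kernel x y t - d * (if t = 0 then 0 else cos (t * y))\<bar>"
      by (simp only: abs_mult abs_of_nonneg[OF char_infprod_nonneg])
    also have "\<dots> \<le> char_infprod a t * (\<bar>t\<bar> * d ^ 2 / 2)"
      using sine_kernel_second_order char_infprod_nonneg by (intro mult_left_mono)
    also have "\<dots> \<le> d ^ 2 * \<bar>t * char_infprod a t\<bar>"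
      using char_infprod_nonneg[of a t] by (simp add: abs_mult)
    finally show "\<bar>f t (y + d) - f t y - d * f' t\<bar> \<le> d ^ 2 * \<bar>t * char_infprod a t\<bar>" .
  qed
  moreover have "(LINT t|lborel. f' t) = cos_transform (char_infprod a) 0 y"
    unfolding cos_transform_def
  proof (rule integral_cong_AE)
    show "AE t in lborel. f' t = char_infprod a t * cos (t * y + 0)"
      using AE_lborel_singleton[of 0] by eventually_elim (simp add: f'_def)
  qed simp_all
  ultimately show ?thesis
    unfolding inversion_integral_def limit_density_def f_def by (intro DERIV_cmult) simp
qed

lemma limit_density_nonneg: "limit_density y \<ge> 0"
proof (rule ccontr)
  assume "\<not> limit_density y \<ge> 0"
  then obtain d where "d > 0"
    and "\<And>h. h > 0 \<Longrightarrow> h < d \<Longrightarrow> inversion_integral (y - 1) (y + h) < inversion_integral (y - 1) y"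
    using DERIV_neg_dec_right[OF DERIV_inversion_integral[of "y - 1" y]] by force
  then have "inversion_integral (y - 1) (y + d / 2) < inversion_integral (y - 1) y"
    by simp
  moreover have "inversion_integral (y - 1) y \<le> inversion_integral (y - 1) (y + d / 2)"
    using \<open>d > 0\<close> by (intro inversion_integral_mono) auto
  ultimately show False by simp
qed

lemma limit_density_eq_0:
  assumes "\<bar>y\<bar> > suminf a"
  shows "limit_density y = 0"
proof -
  obtain x U where U: "open U" "y \<in> U" and null: "\<And>z. z \<in> U \<Longrightarrow> x \<le> z \<and> {x<..z} \<inter> {- suminf a..suminf a} = {}"
  proof (cases "y > 0")
    case True
    show ?thesis
    proof (rule that[of "{suminf a<..}" "suminf a"])
      show "y \<in> {suminf a<..}" using True assms by simp
    qed auto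
  next
    case False
    show ?thesis
    proof (rule that[of "{y - 1<..<- suminf a}" "y - 1"])
      show "y \<in> {y - 1<..<- suminf a}" using False assms by simp
    qed auto
  qed
  have zero: "0 = inversion_integral x z" if "z \<in> U" for z
    using inversion_integral_cong[of x z z z] null[OF that] by simp
  have "((\<lambda>_. 0) has_real_derivative 0) (at y)"
    by simp
  then have "(inversion_integral x has_real_derivative 0) (at y)"
    by (rule has_field_derivative_transform_within_open[OF _ U]) (rule zero)
  then show ?thesis
    by (rule DERIV_unique[OF DERIV_inversion_integral])
qed

lemma smooth_fun_limit_density: "smooth_fun limit_density"
  unfolding limit_density_def[abs_def]
  by (intro smooth_fun_cmult smooth_fun_cos_transform integrable_char_infprod_moment[OF scale_pos]) simp

lemma continuous_on_limit_density: "continuous_on A limit_density"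
proof -
  have "limit_density differentiable at y" for y
    using smooth_fun_limit_density unfolding smooth_fun_def by (metis funpow_0)
  then show ?thesis
    by (intro continuous_at_imp_continuous_on ballI differentiable_imp_continuous_within)
qed

lemma borel_measurable_limit_density [measurable]: "limit_density \<in> borel_measurable borel"
  by (rule borel_measurable_continuous_onI[OF continuous_on_limit_density])

lemma limit_density_minus [simp]: "limit_density (- y) = limit_density y"
  by (simp add: limit_density_def cos_transform_def)

lemma interval_integral_limit_density:
  assumes "x \<le> y"
  shows "(LBINT z=ereal x..ereal y. limit_density z) = inversion_integral x y"
proof -
  have "(LBINT z=ereal x..ereal y. limit_density z) = inversion_integral x y - inversion_integral x x"
    using DERIV_inversion_integral continuous_on_limit_density assms
    by (intro interval_integral_FTC_finite)
       (auto simp: has_real_derivative_iff_has_vector_derivative[symmetric] has_field_derivative_at_within)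
  then show ?thesis by simp
qed

lemma limit_density_eq_indicator:
  assumes "{- suminf a..suminf a} \<subseteq> A"
  shows "indicator A y * limit_density y = limit_density y"
proof (cases "\<bar>y\<bar> > suminf a")
  case False
  then have "y \<in> A" using assms by (force simp: abs_le_iff)
  then show ?thesis by simp
qed (simp add: limit_density_eq_0)

lemma integrable_limit_density: "integrable lborel limit_density"
proof -
  have "set_integrable lborel {- suminf a..suminf a} limit_density"
    by (rule borel_integrable_atLeastAtMost'[OF continuous_on_limit_density])
  then show ?thesis
    by (simp add: set_integrable_def limit_density_eq_indicator)
qed

lemma set_integral_limit_density:
  assumes "x \<le> y"
  shows "(LBINT z:{x<..y}. limit_density z) = inversion_integral x y"
  using interval_integral_limit_density[OF assms] assms by (simp add: interval_integral_Ioc)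

lemma integral_limit_density: "(LINT y|lborel. limit_density y) = 1"
proof -
  let ?x = "- suminf a - 1"
  have "(LINT y|lborel. limit_density y) = (LBINT y:{?x<..suminf a}. limit_density y)"
  proof -
    have "indicator {?x<..suminf a} y * limit_density y = limit_density y" for y
      by (rule limit_density_eq_indicator) auto
    then show ?thesis unfolding set_lebesgue_integral_def real_scaleR_def by (simp only:)
  qed
  also have "\<dots> = 1"
    using suminf_scales_nonneg by (simp add: set_integral_limit_density inversion_integral_total)
  finally show ?thesis .
qed

definition limit_distr :: "real measure" where
  "limit_distr = density lborel (\<lambda>x. ennreal (limit_density x))"

lemma emeasure_limit_distr:
  assumes [measurable]: "A \<in> sets borel"
  shows "emeasure limit_distr A = ennreal (LBINT x:A. limit_density x)"
proof -
  have "emeasure limit_distr A = (\<integral>\<^sup>+x. ennreal (indicator A x *\<^sub>R limit_density x) \<partial>lborel)"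
    unfolding limit_distr_def by (subst emeasure_density) (auto intro!: nn_integral_cong simp: indicator_def)
  also have "\<dots> = ennreal (LBINT x:A. limit_density x)"
    unfolding set_lebesgue_integral_def using limit_density_nonneg
    by (intro nn_integral_eq_integral integrable_mult_indicator integrable_limit_density AE_I2)
       (auto simp: indicator_def)
  finally show ?thesis .
qed

lemma real_distribution_limit_distr: "real_distribution limit_distr"
proof -
  have "emeasure limit_distr (space limit_distr) = 1"
    using emeasure_limit_distr[of UNIV] integral_limit_density
    by (simp add: limit_distr_def set_lebesgue_integral_def)
  then have "prob_space limit_distr"
    by (rule prob_spaceI)
  then show ?thesis
    by (simp add: real_distribution_def real_distribution_axioms_def limit_distr_def)
qed

lemma measure_limit_distr_interval:
  assumes "x \<le> y" shows "measure limit_distr {x<..y} = inversion_integral x y"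
  using emeasure_limit_distr[of "{x<..y}"] set_integral_limit_density[OF assms]
    inversion_integral_mono[of x x y] assms
  by (simp add: measure_def)

lemma weak_conv_parabolic_conv: "weak_conv_m (\<lambda>n. parabolic_conv a (Suc n)) limit_distr"
  unfolding weak_conv_m_def weak_conv_def
proof (intro allI impI)
  fix z
  define c where "c = - suminf a - 1"
  have "AE x in parabolic_conv a (Suc n). x > c" for n
    using AE_parabolic_conv[of "Suc n"] by eventually_elim (simp add: c_def)
  then have cdf_conv: "cdf (parabolic_conv a (Suc n)) z = measure (parabolic_conv a (Suc n)) {c<..z}" for n
    by (rule cdf_eq_measure_greaterThanAtMost[OF real_distribution_parabolic_conv])
  have "limit_density x > 0 \<longrightarrow> x > c" for x
    using limit_density_eq_0[of x] by (cases "\<bar>x\<bar> > suminf a") (auto simp: c_def)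
  then have "AE x in limit_distr. x > c"
    unfolding limit_distr_def by (subst AE_density) (auto intro!: AE_I2)
  then have cdf_limit: "cdf limit_distr z = measure limit_distr {c<..z}"
    by (rule cdf_eq_measure_greaterThanAtMost[OF real_distribution_limit_distr])
  show "(\<lambda>n. cdf (parabolic_conv a (Suc n)) z) \<longlonglongrightarrow> cdf limit_distr z"
  proof (cases "c \<le> z")
    case True
    then show ?thesis
      unfolding cdf_conv cdf_limit measure_limit_distr_interval[OF True]
      by (rule tendsto_measure_parabolic_conv)
  qed (simp only: cdf_conv cdf_limit, simp)
qed

lemma char_limit_distr: "char limit_distr t = complex_of_real (char_infprod a t)"
proof -
  have "(\<lambda>n. char (parabolic_conv a (Suc n)) t) \<longlonglongrightarrow> char limit_distr t"
    by (rule levy_continuity1[OF real_distribution_parabolic_conv real_distribution_limit_distr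
          weak_conv_parabolic_conv])
  moreover have "(\<lambda>n. char (parabolic_conv a (Suc n)) t) \<longlonglongrightarrow> complex_of_real (char_infprod a t)"
    unfolding char_parabolic_conv by (intro tendsto_of_real LIMSEQ_Suc[OF char_prod_tendsto])
  ultimately show ?thesis
    by (rule LIMSEQ_unique)
qed

lemma fourier_limit_density: "fourier limit_density k = complex_of_real (char_infprod a k)"
proof -
  have "fourier limit_density k = (CLINT x|lborel. limit_density x *\<^sub>R iexp (- k * x))"
    unfolding fourier_def
    by (intro Bochner_Integration.integral_cong) (auto simp: cis_conv_exp scaleR_conv_of_real mult.commute)
  also have "\<dots> = char limit_distr (- k)"
    unfolding char_def limit_distr_def using limit_density_nonneg by (subst integral_density) auto
  finally show ?thesis
    by (simp add: char_limit_distr)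
qed

lemma char_infprod_ge_exp:
  fixes \<epsilon> :: "real \<Rightarrow> real"
  assumes \<gamma>: "0 < \<gamma>" "\<gamma> < 1"
    and eps_mono: "antimono_on {0..} \<epsilon>"
    and K_pos: "K > 0" and eps_large: "\<And>k. k \<ge> K \<Longrightarrow> c \<le> k powr \<gamma> * \<epsilon> k"
    and scales_small: "3 * suminf a \<le> \<epsilon> K"
    and summable_powr: "summable (\<lambda>j. a j powr (1 - \<gamma>))"
    and powr_scales_small: "(2 / (1 - \<gamma>) + 1) * (\<Sum>j. a j powr (1 - \<gamma>)) \<le> c"
  shows "char_infprod a k \<ge> exp (- \<bar>k\<bar> * \<epsilon> \<bar>k\<bar>)"
proof (cases "\<bar>k\<bar> \<le> K")
  case True
  have "\<epsilon> K \<le> \<epsilon> \<bar>k\<bar>"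
    using eps_mono True by (auto simp: monotone_on_def)
  then have "3 * suminf a * \<bar>k\<bar> \<le> \<epsilon> \<bar>k\<bar> * \<bar>k\<bar>"
    using scales_small by (intro mult_right_mono) auto
  then have "exp (- \<bar>k\<bar> * \<epsilon> \<bar>k\<bar>) \<le> exp (- (3 * suminf a * \<bar>k\<bar>))"
    by (simp add: mult.commute)
  moreover have "char_infprod a k \<ge> exp (- (3 * suminf a * \<bar>k\<bar>))"
    using char_infprod_ge_exp_powr[of 1 a k] scale_pos scales_summable
    by (simp add: less_imp_le)
  ultimately show ?thesis
    by linarith
next
  case False
  define \<beta> where "\<beta> = 1 - \<gamma>"
  have "c * \<bar>k\<bar> powr \<beta> \<le> \<bar>k\<bar> powr \<gamma> * \<epsilon> \<bar>k\<bar> * \<bar>k\<bar> powr \<beta>"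
    using eps_large[of "\<bar>k\<bar>"] False by (simp add: mult_right_mono)
  also have "\<dots> = \<bar>k\<bar> powr (\<gamma> + \<beta>) * \<epsilon> \<bar>k\<bar>"
    by (simp add: powr_add)
  also have "\<dots> = \<bar>k\<bar> * \<epsilon> \<bar>k\<bar>"
    using False K_pos by (simp add: \<beta>_def)
  finally have "(2 / \<beta> + 1) * (\<Sum>j. a j powr \<beta>) * \<bar>k\<bar> powr \<beta> \<le> \<bar>k\<bar> * \<epsilon> \<bar>k\<bar>"
    using mult_right_mono[OF powr_scales_small, of "\<bar>k\<bar> powr \<beta>"] by (simp add: \<beta>_def)
  then have "exp (- \<bar>k\<bar> * \<epsilon> \<bar>k\<bar>) \<le> exp (- ((2 / \<beta> + 1) * (\<Sum>j. a j powr \<beta>) * \<bar>k\<bar> powr \<beta>))"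
    by simp
  moreover have "char_infprod a k \<ge> exp (- ((2 / \<beta> + 1) * (\<Sum>j. a j powr \<beta>) * \<bar>k\<bar> powr \<beta>))"
    using char_infprod_ge_exp_powr[of \<beta> a k] \<gamma> scale_pos summable_powr by (simp add: \<beta>_def)
  ultimately show ?thesis
    by linarith
qed

end

section \<open>Choice of the scales\<close>

lemma summable_Suc_powr: "p > 1 \<Longrightarrow> summable (\<lambda>j::nat. real (Suc j) powr (- p))"
  using summable_real_powr_iff[of "- p"] summable_Suc_iff[of "\<lambda>n. real n powr (- p)"] by simp

lemma summable_Suc_powr_powr:
  assumes "0 < \<beta>" "\<beta> < 1"
  shows "summable (\<lambda>j. real (Suc j) powr (- (2 / \<beta>)))"
    and "summable (\<lambda>j. (real (Suc j) powr (- (2 / \<beta>))) powr \<beta>)"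
proof -
  show "summable (\<lambda>j. real (Suc j) powr (- (2 / \<beta>)))"
    using assms by (intro summable_Suc_powr) (simp add: field_simps)
  have "(real (Suc j) powr (- (2 / \<beta>))) powr \<beta> = real (Suc j) powr (- 2)" for j
    using assms by (simp add: powr_powr)
  then show "summable (\<lambda>j. (real (Suc j) powr (- (2 / \<beta>))) powr \<beta>)"
    using summable_Suc_powr[of 2] by (simp del: of_nat_Suc)
qed

lemma exists_summable_scales:
  assumes \<beta>: "0 < \<beta>" "\<beta> < 1" and r: "r > 0"
  obtains a where "summable_scales a" "suminf a \<le> r"
    "summable (\<lambda>j. a j powr \<beta>)" "(\<Sum>j. a j powr \<beta>) \<le> r"
proof -
  define e where "e j = real (Suc j) powr (- (2 / \<beta>))" for j
  have e_pos: "e j > 0" for j by (simp add: e_def)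
  have "summable e" "summable (\<lambda>j. e j powr \<beta>)"
    unfolding e_def using summable_Suc_powr_powr[OF \<beta>] by simp_all
  define Z1 Z\<beta> where "Z1 = suminf e" and "Z\<beta> = (\<Sum>j. e j powr \<beta>)"
  have "Z1 \<ge> 0" "Z\<beta> \<ge> 0"
    unfolding Z1_def Z\<beta>_def using \<open>summable e\<close> \<open>summable (\<lambda>j. e j powr \<beta>)\<close> e_pos
    by (simp_all add: suminf_nonneg less_imp_le)
  define \<kappa> where "\<kappa> = min (r / (Z1 + 1)) ((r / (Z\<beta> + 1)) powr (1 / \<beta>))"
  have \<kappa>: "\<kappa> > 0" using r \<open>Z1 \<ge> 0\<close> \<open>Z\<beta> \<ge> 0\<close> by (simp add: \<kappa>_def)
  show ?thesis
  proof (rule that[of "\<lambda>j. \<kappa> * e j"])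
    show "summable_scales (\<lambda>j. \<kappa> * e j)"
      using \<kappa> e_pos \<open>summable e\<close> by unfold_locales (auto intro: summable_mult)
    have "(\<Sum>j. \<kappa> * e j) = \<kappa> * Z1"
      unfolding Z1_def by (rule suminf_mult[OF \<open>summable e\<close>])
    also have "\<dots> \<le> r / (Z1 + 1) * (Z1 + 1)"
      using \<open>Z1 \<ge> 0\<close> \<kappa> by (intro mult_mono) (auto simp: \<kappa>_def)
    finally show "(\<Sum>j. \<kappa> * e j) \<le> r"
      using \<open>Z1 \<ge> 0\<close> by simp
    have scaled_powr: "(\<kappa> * e j) powr \<beta> = \<kappa> powr \<beta> * e j powr \<beta>" for j
      using \<kappa> e_pos[of j] by (simp add: powr_mult)
    then show "summable (\<lambda>j. (\<kappa> * e j) powr \<beta>)"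
      using \<open>summable (\<lambda>j. e j powr \<beta>)\<close> by (simp add: summable_mult)
    have "(\<Sum>j. (\<kappa> * e j) powr \<beta>) = \<kappa> powr \<beta> * Z\<beta>"
      unfolding scaled_powr Z\<beta>_def by (rule suminf_mult[OF \<open>summable (\<lambda>j. e j powr \<beta>)\<close>])
    also have "\<dots> \<le> r / (Z\<beta> + 1) * (Z\<beta> + 1)"
    proof (intro mult_mono)
      have "\<kappa> powr \<beta> \<le> ((r / (Z\<beta> + 1)) powr (1 / \<beta>)) powr \<beta>"
        using \<kappa> \<beta> by (intro powr_mono2) (auto simp: \<kappa>_def)
      then show "\<kappa> powr \<beta> \<le> r / (Z\<beta> + 1)"
        using \<beta> r \<open>Z\<beta> \<ge> 0\<close> by (simp add: powr_powr)
    qed (use \<open>Z\<beta> \<ge> 0\<close> r in auto)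
    finally show "(\<Sum>j. (\<kappa> * e j) powr \<beta>) \<le> r"
      using \<open>Z\<beta> \<ge> 0\<close> by simp
  qed
qed

lemma eventually_ge_of_Liminf_pos:
  fixes f :: "real \<Rightarrow> real"
  assumes "Liminf at_top (\<lambda>k. ereal (f k)) > 0"
  obtains c K where "c > 0" "K > 0" "\<And>k. k \<ge> K \<Longrightarrow> c \<le> f k"
proof -
  obtain c where "0 < ereal c" "ereal c < Liminf at_top (\<lambda>k. ereal (f k))"
    using ereal_dense2[OF assms] by blast
  then obtain N where "c > 0" "\<And>k. k \<ge> N \<Longrightarrow> c < f k"
    using less_LiminfD by (fastforce simp: eventually_at_top_linorder)
  then show ?thesis
    by (intro that[of c "max N 1"]) (auto intro: less_imp_le)
qed

theorem mainTheorem6: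
  fixes l \<gamma> :: real and \<epsilon> :: "real \<Rightarrow> real"
  assumes l_pos: "l > 0"
    and gamma: "0 < \<gamma>" "\<gamma> < 1"
    and eps_pos: "\<forall>k\<ge>0. \<epsilon> k > 0"
    and eps_mono: "antimono_on {0..} \<epsilon>"
    and eps_meas: "set_borel_measurable lborel {0..} \<epsilon>"
    and eps_int: "set_integrable lborel {1..} (\<lambda>k. \<epsilon> k / k)"
    and eps_liminf: "Liminf at_top (\<lambda>k. ereal (k powr \<gamma> * \<epsilon> k)) > 0"
  shows "\<exists>g :: real \<Rightarrow> real.
           smooth_fun g
         \<and> (\<forall>x. g x \<ge> 0)
         \<and> (\<forall>x. g (- x) = g x)
         \<and> (\<forall>x. \<bar>x\<bar> > l \<longrightarrow> g x = 0)
         \<and> integrable lborel g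
         \<and> (LINT x|lborel. g x) = 1
         \<and> (\<forall>k. \<exists>r. fourier g k = complex_of_real r
                     \<and> r \<ge> exp (- \<bar>k\<bar> * \<epsilon> \<bar>k\<bar>))"
proof -
  obtain c K where "c > 0" "K > 0" and eps_large: "\<And>k. k \<ge> K \<Longrightarrow> c \<le> k powr \<gamma> * \<epsilon> k"
    using eventually_ge_of_Liminf_pos[OF eps_liminf] by blast
  define r where "r = min l (min (\<epsilon> K / 3) (c / (2 / (1 - \<gamma>) + 1)))"
  have "2 / (1 - \<gamma>) + 1 > 0"
    using gamma by (simp add: add_pos_pos)
  then have "r > 0"
    using l_pos eps_pos \<open>c > 0\<close> \<open>K > 0\<close> by (simp add: r_def)
  then obtain a where "summable_scales a" "suminf a \<le> r"
    and summable_powr: "summable (\<lambda>j. a j powr (1 - \<gamma>))" and "(\<Sum>j. a j powr (1 - \<gamma>)) \<le> r"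
    using exists_summable_scales[of "1 - \<gamma>" r] gamma by auto
  interpret summable_scales a by fact
  have "char_infprod a k \<ge> exp (- \<bar>k\<bar> * \<epsilon> \<bar>k\<bar>)" for k
    using \<open>suminf a \<le> r\<close> \<open>(\<Sum>j. a j powr (1 - \<gamma>)) \<le> r\<close> gamma
    by (intro char_infprod_ge_exp[OF gamma eps_mono \<open>K > 0\<close> eps_large _ summable_powr])
       (auto simp: r_def field_simps)
  then show ?thesis
    using smooth_fun_limit_density limit_density_nonneg limit_density_eq_0 \<open>suminf a \<le> r\<close>
      integrable_limit_density integral_limit_density fourier_limit_density
    by (intro exI[of _ limit_density]) (auto simp: r_def)
qed

end
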